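(* Let $p=p(n)$ and $G\in\mathcal G(n,p)$. If $p=o(n^{-3/2})$, then with high probability $G$ is reconstructible from its $1$-neighbourhoods.
   Context: $\mathcal G(n,p)$ is the Erdős–Rényi random graph on vertex set $[n]$ in which each pair is an edge independently with probability $p$. "With high probability" means with probability tending to $1$ as $n\to\infty$. For a graph $G$, a vertex $v$ and an integer $r\ge1$, the $r$-neighbourhood $N_r^{(G)}(v)$ is the subgraph of $G$ induced by the vertices at distance at most $r$ from $v$, considered as a graph rooted at $v$. Graphs $G$ and $H$ have isomorphic $r$-neighbourhoods if there is a bijection $\phi:V(G)\to V(H)$ such that for every $v\in V(G)$ there is a graph isomorphism $N_r^{(G)}(v)\to N_r^{(H)}(\phi(v))$ mapping $v$ to $\phi(v)$. $G$ is reconstructible from its $r$-neighbourhoods if every graph $H$ with $r$-neighbourhoods isomorphic to those of $G$ is isomorphic to $G$. *)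

theory Defs
  imports Complex_Main "HOL-Library.Landau_Symbols"
begin

text \<open>Simple graphs on the vertex set [n] = {0..<n}, given by their edge sets
  (edges are 2-element sets {u,v} with u \<noteq> v).\<close>

definition vpairs :: "nat \<Rightarrow> nat set set" where
  "vpairs n = {e. \<exists>u v. u < n \<and> v < n \<and> u \<noteq> v \<and> e = {u, v}}"

definition closed_nbhd :: "nat set set \<Rightarrow> nat \<Rightarrow> nat set" where
  "closed_nbhd E v = insert v {u. {u, v} \<in> E}"

definition rooted_induced_iso ::
  "nat set set \<Rightarrow> nat set \<Rightarrow> nat \<Rightarrow> nat set set \<Rightarrow> nat set \<Rightarrow> nat \<Rightarrow> bool" where
  "rooted_induced_iso E A a F B b \<longleftrightarrow>
     (\<exists>f. bij_betw f A B \<and> f a = b \<and>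
          (\<forall>x\<in>A. \<forall>y\<in>A. {x, y} \<in> E \<longleftrightarrow> {f x, f y} \<in> F))"

definition nbhd1_iso :: "nat set set \<Rightarrow> nat \<Rightarrow> nat set set \<Rightarrow> nat \<Rightarrow> bool" where
  "nbhd1_iso E v H w = rooted_induced_iso E (closed_nbhd E v) v H (closed_nbhd H w) w"

definition graph_iso :: "nat \<Rightarrow> nat set set \<Rightarrow> nat set set \<Rightarrow> bool" where
  "graph_iso n E H \<longleftrightarrow>
     (\<exists>f. bij_betw f {..<n} {..<n} \<and>
          (\<forall>x<n. \<forall>y<n. {x, y} \<in> E \<longleftrightarrow> {f x, f y} \<in> H))"

definition same_1nbhds :: "nat \<Rightarrow> nat set set \<Rightarrow> nat set set \<Rightarrow> bool" where
  "same_1nbhds n E H \<longleftrightarrow>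
     (\<exists>\<phi>. bij_betw \<phi> {..<n} {..<n} \<and> (\<forall>v<n. nbhd1_iso E v H (\<phi> v)))"

definition reconstructible_1 :: "nat \<Rightarrow> nat set set \<Rightarrow> bool" where
  "reconstructible_1 n E \<longleftrightarrow>
     (\<forall>H. H \<subseteq> vpairs n \<longrightarrow> same_1nbhds n E H \<longrightarrow> graph_iso n E H)"

definition gnp_prob :: "nat \<Rightarrow> real \<Rightarrow> (nat set set \<Rightarrow> bool) \<Rightarrow> real" where
  "gnp_prob n p P =
     (\<Sum>E \<in> {E. E \<subseteq> vpairs n \<and> P E}. p ^ card E * (1 - p) ^ (card (vpairs n) - card E))"

end

theory Submission
  imports Defs "HOL-Combinatorics.Transposition"
begin

text \<open>A graph whose edges are pairwise disjoint is reconstructible from its 1-neighbourhoods: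
  the sizes of the neighbourhoods show that any graph with the same neighbourhoods again has
  maximum degree at most one and the same number of covered vertices, hence the same number of
  edges, and two matchings with equally many edges on the same vertex set are isomorphic.
  A graph is not a matching only if it contains a path with two edges; there are at most
  \<open>n\<^sup>3\<close> such paths, each present with probability \<open>p\<^sup>2\<close>, so the probability of failure is at
  most \<open>n\<^sup>3 p\<^sup>2\<close>, which tends to 0 when \<open>p = o(n powr (-3/2))\<close>.\<close>

section \<open>The binomial random graph\<close>

lemma sum_Pow_binomial_weights:
  fixes q :: real
  assumes "finite S"
  shows "(\<Sum>E\<in>Pow S. q ^ card E * (1 - q) ^ (card S - card E)) = 1"
  using assms
proof (induction S rule: finite_induct)
  case empty
  then show ?case by simp
next
  case (insert x S)
  let ?w = "\<lambda>S E. q ^ card E * (1 - q) ^ (card S - card E)"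
  have fin: "finite (Pow S)" using insert.hyps(1) by simp
  have disj: "Pow S \<inter> insert x ` Pow S = {}" using insert.hyps(2) by auto
  have inj: "inj_on (insert x) (Pow S)"
    using insert.hyps(2) unfolding inj_on_def by (metis PowD insert_ident subset_iff)
  have without_x: "(\<Sum>E\<in>Pow S. ?w (insert x S) E) = (1 - q) * (\<Sum>E\<in>Pow S. ?w S E)"
    unfolding sum_distrib_left
  proof (rule sum.cong)
    fix E assume "E \<in> Pow S"
    then have "card E \<le> card S" using insert.hyps(1) by (simp add: card_mono)
    then show "?w (insert x S) E = (1 - q) * ?w S E" using insert.hyps by (simp add: Suc_diff_le)
  qed simp
  have with_x: "(\<Sum>E\<in>insert x ` Pow S. ?w (insert x S) E) = q * (\<Sum>E\<in>Pow S. ?w S E)"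
    unfolding sum.reindex[OF inj] sum_distrib_left
  proof (rule sum.cong)
    fix E assume "E \<in> Pow S"
    then have "finite E" "x \<notin> E" using insert.hyps finite_subset by auto
    then show "(?w (insert x S) \<circ> insert x) E = q * ?w S E" using insert.hyps by simp
  qed simp
  show ?case
    unfolding Pow_insert sum.union_disjoint[OF fin finite_imageI[OF fin] disj]
    using without_x with_x insert.IH by (simp add: algebra_simps)
qed

lemma sum_supersets_binomial_weights:
  fixes q :: real
  assumes "finite S" "A \<subseteq> S"
  shows "(\<Sum>E\<in>{E. E \<subseteq> S \<and> A \<subseteq> E}. q ^ card E * (1 - q) ^ (card S - card E)) = q ^ card A"
proof -
  have supersets: "{E. E \<subseteq> S \<and> A \<subseteq> E} = (\<union>) A ` Pow (S - A)"
  proof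
    show "{E. E \<subseteq> S \<and> A \<subseteq> E} \<subseteq> (\<union>) A ` Pow (S - A)"
    proof
      fix E assume "E \<in> {E. E \<subseteq> S \<and> A \<subseteq> E}"
      then have "E = A \<union> (E - A)" "E - A \<in> Pow (S - A)" by auto
      then show "E \<in> (\<union>) A ` Pow (S - A)" by blast
    qed
  qed (use assms in auto)
  have inj: "inj_on ((\<union>) A) (Pow (S - A))" unfolding inj_on_def by blast
  have fin_A: "finite A" using assms finite_subset by blast
  have card_rest: "card (S - A) = card S - card A" using assms fin_A by (simp add: card_Diff_subset)
  have "(\<Sum>E\<in>{E. E \<subseteq> S \<and> A \<subseteq> E}. q ^ card E * (1 - q) ^ (card S - card E))
      = (\<Sum>E\<in>Pow (S - A). q ^ card A * (q ^ card E * (1 - q) ^ (card (S - A) - card E)))"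
    unfolding supersets sum.reindex[OF inj]
  proof (rule sum.cong)
    fix E assume E: "E \<in> Pow (S - A)"
    then have "finite E" "A \<inter> E = {}" using assms finite_subset[of E S] by auto
    then have card_Un: "card (A \<union> E) = card A + card E" using fin_A card_Un_disjoint by blast
    have "card E \<le> card (S - A)" using E assms by (simp add: card_mono)
    then have "card S - card (A \<union> E) = card (S - A) - card E" using card_Un card_rest by simp
    then show "((\<lambda>E. q ^ card E * (1 - q) ^ (card S - card E)) \<circ> (\<union>) A) E
        = q ^ card A * (q ^ card E * (1 - q) ^ (card (S - A) - card E))"
      using card_Un by (simp add: power_add)
  qed simp
  also have "\<dots> = q ^ card A"
    unfolding sum_distrib_left[symmetric] using sum_Pow_binomial_weights[of "S - A" q] assms by simp
  finally show ?thesis .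
qed

lemma finite_vpairs: "finite (vpairs n)"
proof (rule finite_subset)
  show "vpairs n \<subseteq> Pow {..<n}" unfolding vpairs_def by auto
qed simp

lemma gnp_prob_nonneg:
  fixes q :: real
  assumes "0 \<le> q" "q \<le> 1"
  shows "0 \<le> gnp_prob n q P"
  unfolding gnp_prob_def using assms by (intro sum_nonneg) simp

lemma gnp_prob_compl: "gnp_prob n q (\<lambda>E. \<not> P E) = 1 - gnp_prob n q P"
proof -
  have fin: "finite (Pow (vpairs n))" using finite_vpairs by simp
  have split: "Pow (vpairs n) = {E. E \<subseteq> vpairs n \<and> P E} \<union> {E. E \<subseteq> vpairs n \<and> \<not> P E}" by auto
  have "gnp_prob n q P + gnp_prob n q (\<lambda>E. \<not> P E)
      = (\<Sum>E\<in>Pow (vpairs n). q ^ card E * (1 - q) ^ (card (vpairs n) - card E))"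
    unfolding gnp_prob_def split by (rule sum.union_disjoint[symmetric]) (use fin split in auto)
  also have "\<dots> = 1" by (rule sum_Pow_binomial_weights[OF finite_vpairs])
  finally show ?thesis by simp
qed

lemma gnp_prob_le_1:
  fixes q :: real
  assumes "0 \<le> q" "q \<le> 1"
  shows "gnp_prob n q P \<le> 1"
  using gnp_prob_compl[of n q P] gnp_prob_nonneg[OF assms, of n "\<lambda>E. \<not> P E"] by simp

lemma gnp_prob_union_bound:
  fixes q :: real
  assumes q: "0 \<le> q" "q \<le> 1" and "finite T"
    and A: "\<And>t. t \<in> T \<Longrightarrow> A t \<subseteq> vpairs n"
    and cover: "\<And>E. E \<subseteq> vpairs n \<Longrightarrow> P E \<Longrightarrow> \<exists>t\<in>T. A t \<subseteq> E"
  shows "gnp_prob n q P \<le> (\<Sum>t\<in>T. q ^ card (A t))"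
proof -
  define w where "w E = q ^ card E * (1 - q) ^ (card (vpairs n) - card E)" for E :: "nat set set"
  have w_nonneg: "0 \<le> w E" for E unfolding w_def using q by simp
  have fin: "finite (Pow (vpairs n))" using finite_vpairs by simp
  have "gnp_prob n q P = (\<Sum>E\<in>{E. E \<subseteq> vpairs n \<and> P E}. w E)" unfolding gnp_prob_def w_def ..
  also have "\<dots> \<le> (\<Sum>E\<in>{E. E \<subseteq> vpairs n \<and> P E}. \<Sum>t\<in>T. if A t \<subseteq> E then w E else 0)"
  proof (rule sum_mono)
    fix E assume "E \<in> {E. E \<subseteq> vpairs n \<and> P E}"
    then obtain t where t: "t \<in> T" "A t \<subseteq> E" using cover by blast
    have "w E = (if A t \<subseteq> E then w E else 0)" using t by simp
    also have "\<dots> \<le> (\<Sum>t\<in>T. if A t \<subseteq> E then w E else 0)"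
      by (rule member_le_sum) (use t \<open>finite T\<close> w_nonneg in auto)
    finally show "w E \<le> (\<Sum>t\<in>T. if A t \<subseteq> E then w E else 0)" .
  qed
  also have "\<dots> \<le> (\<Sum>E\<in>Pow (vpairs n). \<Sum>t\<in>T. if A t \<subseteq> E then w E else 0)"
    by (rule sum_mono2[OF fin]) (auto simp: w_nonneg intro: sum_nonneg)
  also have "\<dots> = (\<Sum>t\<in>T. \<Sum>E\<in>Pow (vpairs n). if A t \<subseteq> E then w E else 0)"
    by (rule sum.swap)
  also have "\<dots> = (\<Sum>t\<in>T. q ^ card (A t))"
  proof (rule sum.cong)
    fix t assume "t \<in> T"
    have "(\<Sum>E\<in>Pow (vpairs n). if A t \<subseteq> E then w E else 0) = (\<Sum>E\<in>{E \<in> Pow (vpairs n). A t \<subseteq> E}. w E)"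
      by (rule sum.inter_filter[symmetric, OF fin])
    also have "{E \<in> Pow (vpairs n). A t \<subseteq> E} = {E. E \<subseteq> vpairs n \<and> A t \<subseteq> E}" by auto
    also have "(\<Sum>E\<in>{E. E \<subseteq> vpairs n \<and> A t \<subseteq> E}. w E) = q ^ card (A t)"
      unfolding w_def by (rule sum_supersets_binomial_weights[OF finite_vpairs A[OF \<open>t \<in> T\<close>]])
    finally show "(\<Sum>E\<in>Pow (vpairs n). if A t \<subseteq> E then w E else 0) = q ^ card (A t)" .
  qed simp
  finally show ?thesis .
qed

lemma gnp_prob_mono:
  fixes q :: real
  assumes "0 \<le> q" "q \<le> 1" and "\<And>E. E \<subseteq> vpairs n \<Longrightarrow> P E \<Longrightarrow> Q E"
  shows "gnp_prob n q P \<le> gnp_prob n q Q"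
  unfolding gnp_prob_def
proof (rule sum_mono2)
  show "finite {E. E \<subseteq> vpairs n \<and> Q E}" using finite_vpairs by simp
qed (use assms in auto)

section \<open>Graphs of maximum degree one\<close>

definition degree :: "nat set set \<Rightarrow> nat \<Rightarrow> nat" where
  "degree E v = card {u. {u, v} \<in> E}"

definition matching :: "nat set set \<Rightarrow> bool" where
  "matching E \<longleftrightarrow> pairwise disjnt E"

lemma vpairs_memE:
  assumes "e \<in> vpairs n" "v \<in> e"
  obtains u where "u < n" "v < n" "u \<noteq> v" "e = {u, v}"
  using assms unfolding vpairs_def by (auto simp: insert_commute)

lemma neighbours_subset:
  assumes "E \<subseteq> vpairs n"
  shows "{u. {u, v} \<in> E} \<subseteq> {..<n} - {v}"
proof
  fix u assume "u \<in> {u. {u, v} \<in> E}"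
  then have "{u, v} \<in> vpairs n" using assms by blast
  then show "u \<in> {..<n} - {v}" by (rule vpairs_memE[of _ n u]) (auto simp: doubleton_eq_iff)
qed

lemma card_closed_nbhd:
  assumes "E \<subseteq> vpairs n"
  shows "card (closed_nbhd E v) = Suc (degree E v)"
proof -
  have "finite {u. {u, v} \<in> E}" "v \<notin> {u. {u, v} \<in> E}"
    using neighbours_subset[OF assms, of v] finite_subset by blast+
  then show ?thesis unfolding closed_nbhd_def degree_def by simp
qed

lemma covered_iff_degree_pos:
  assumes "E \<subseteq> vpairs n"
  shows "v \<in> \<Union>E \<longleftrightarrow> degree E v \<noteq> 0"
proof -
  have fin: "finite {u. {u, v} \<in> E}" using neighbours_subset[OF assms] finite_subset by blast
  have "v \<in> \<Union>E \<longleftrightarrow> (\<exists>u. {u, v} \<in> E)"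
  proof
    assume "v \<in> \<Union>E"
    then obtain e where "e \<in> E" "v \<in> e" by blast
    moreover from this obtain u where "e = {u, v}" using assms by (meson subsetD vpairs_memE)
    ultimately show "\<exists>u. {u, v} \<in> E" by blast
  qed blast
  then show ?thesis unfolding degree_def using fin by auto
qed

lemma Union_eq_positive_degree:
  assumes "E \<subseteq> vpairs n"
  shows "\<Union>E = {v \<in> {..<n}. degree E v \<noteq> 0}"
proof -
  have "\<Union>E \<subseteq> {..<n}" using assms unfolding vpairs_def by auto
  then show ?thesis using covered_iff_degree_pos[OF assms] by blast
qed

lemma matching_iff_degree_le_1:
  assumes E: "E \<subseteq> vpairs n"
  shows "matching E \<longleftrightarrow> (\<forall>v<n. degree E v \<le> 1)"
proof
  assume m: "matching E"
  show "\<forall>v<n. degree E v \<le> 1"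
  proof (intro allI impI)
    fix v :: nat
    have unique: "x = y" if "{x, v} \<in> E" "{y, v} \<in> E" for x y
    proof (rule ccontr)
      assume "x \<noteq> y"
      then have "{x, v} \<noteq> {y, v}" by (auto simp: doubleton_eq_iff)
      then have "disjnt {x, v} {y, v}" using m that unfolding matching_def by (metis pairwiseD)
      then show False by (simp add: disjnt_def)
    qed
    have "finite {u. {u, v} \<in> E}" using neighbours_subset[OF E] finite_subset by blast
    then have "card {u. {u, v} \<in> E} \<le> Suc 0"
      using unique by (simp add: card_le_Suc0_iff_eq)
    then show "degree E v \<le> 1" unfolding degree_def by simp
  qed
next
  assume deg: "\<forall>v<n. degree E v \<le> 1"
  show "matching E"
    unfolding matching_def pairwise_def disjnt_def
  proof (intro ballI impI; rule ccontr)
    fix e1 e2 assume e: "e1 \<in> E" "e2 \<in> E" "e1 \<noteq> e2" "e1 \<inter> e2 \<noteq> {}"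
    then obtain x where "x \<in> e1" "x \<in> e2" by blast
    moreover have "e1 \<in> vpairs n" "e2 \<in> vpairs n" using e(1,2) E by blast+
    ultimately obtain y z where x: "x < n" and yz: "e1 = {y, x}" "e2 = {z, x}"
      using vpairs_memE by metis
    have "y \<noteq> z" using yz e(3) by blast
    then have "card {y, z} = 2" by simp
    moreover have "{y, z} \<subseteq> {u. {u, x} \<in> E}" using yz e by auto
    moreover have "finite {u. {u, x} \<in> E}" using neighbours_subset[OF E] finite_subset by blast
    ultimately have "2 \<le> degree E x" unfolding degree_def by (metis card_mono)
    then show False using deg x by fastforce
  qed
qed

lemma card_Union_matching:
  assumes E: "E \<subseteq> vpairs n" and "matching E"
  shows "card (\<Union>E) = 2 * card E"
proof -
  have card_e: "card e = 2" if "e \<in> E" for e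
    using that E unfolding vpairs_def by auto
  have "card (\<Union>E) = sum card E"
  proof (rule card_Union_disjoint)
    show "pairwise disjnt E" using \<open>matching E\<close> unfolding matching_def .
    show "finite e" if "e \<in> E" for e using card_e[OF that] by (simp add: card_ge_0_finite)
  qed
  also have "\<dots> = 2 * card E" using card_e by simp
  finally show ?thesis .
qed

section \<open>Isomorphisms between matchings\<close>

definition graph_iso_map :: "nat \<Rightarrow> (nat \<Rightarrow> nat) \<Rightarrow> nat set set \<Rightarrow> nat set set \<Rightarrow> bool" where
  "graph_iso_map n f E H \<longleftrightarrow>
     bij_betw f {..<n} {..<n} \<and> (\<forall>x<n. \<forall>y<n. {x, y} \<in> E \<longleftrightarrow> {f x, f y} \<in> H)"

lemma graph_iso_iff_map: "graph_iso n E H \<longleftrightarrow> (\<exists>f. graph_iso_map n f E H)"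
  unfolding graph_iso_def graph_iso_map_def ..

lemma transpose_uncovered_edge_iff:
  assumes "a \<notin> \<Union>H" "b \<notin> \<Union>H"
  shows "{transpose a b x, transpose a b y} \<in> H \<longleftrightarrow> {x, y} \<in> H"
proof -
  have fixed: "{transpose a b x, transpose a b y} \<in> H" if "{x, y} \<in> H" for x y
  proof -
    have "x \<noteq> a" "x \<noteq> b" "y \<noteq> a" "y \<noteq> b" using assms that by blast+
    then show ?thesis using that by simp
  qed
  show ?thesis using fixed[of "transpose a b x" "transpose a b y"] fixed[of x y] by auto
qed

lemma graph_iso_map_uncovered:
  assumes f: "graph_iso_map n f E H" and H: "H \<subseteq> vpairs n"
    and "x < n" "x \<notin> \<Union>E"
  shows "f x \<notin> \<Union>H"
proof
  assume "f x \<in> \<Union>H"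
  then obtain e where e: "e \<in> H" "f x \<in> e" by blast
  then obtain w where "w < n" "e = {w, f x}" using H by (meson subsetD vpairs_memE)
  moreover have "f ` {..<n} = {..<n}" using f unfolding graph_iso_map_def bij_betw_def by blast
  ultimately obtain z where "z < n" "{f z, f x} \<in> H" using e by (metis imageE lessThan_iff)
  then have "{z, x} \<in> E" using f \<open>x < n\<close> unfolding graph_iso_map_def by blast
  then show False using \<open>x \<notin> \<Union>E\<close> by blast
qed

lemma graph_iso_map_transpose_uncovered:
  assumes f: "graph_iso_map n f E H"
    and "a < n" "b < n" "a \<notin> \<Union>H" "b \<notin> \<Union>H"
  shows "graph_iso_map n (transpose a b \<circ> f) E H"
proof -
  have "bij_betw (transpose a b \<circ> f) {..<n} {..<n}"
    using f assms(2,3) unfolding graph_iso_map_def by (auto intro: bij_betw_trans)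
  then show ?thesis
    using f transpose_uncovered_edge_iff[OF assms(4,5)] unfolding graph_iso_map_def by simp
qed

lemma graph_iso_map_insert_edge:
  assumes g: "graph_iso_map n g E H" and "a < n" "b < n"
  shows "graph_iso_map n g (insert {a, b} E) (insert {g a, g b} H)"
  unfolding graph_iso_map_def
proof (intro conjI allI impI)
  show bij: "bij_betw g {..<n} {..<n}" using g unfolding graph_iso_map_def by blast
  fix x y assume "x < n" "y < n"
  then have "g ` {x, y} = g ` {a, b} \<longleftrightarrow> {x, y} = {a, b}"
    using bij \<open>a < n\<close> \<open>b < n\<close> by (intro inj_on_image_eq_iff[of g "{..<n}"]) (auto simp: bij_betw_def)
  then show "{x, y} \<in> insert {a, b} E \<longleftrightarrow> {g x, g y} \<in> insert {g a, g b} H"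
    using g \<open>x < n\<close> \<open>y < n\<close> unfolding graph_iso_map_def by auto
qed

text \<open>Two transpositions of uncovered vertices move the images of \<open>a\<close> and \<open>b\<close> to \<open>c\<close> and \<open>d\<close>;
  the first sends \<open>f a\<close> to \<open>c\<close>, the second the new image of \<open>b\<close> to \<open>d\<close> without moving \<open>c\<close>.\<close>

lemma graph_iso_map_prescribe_uncovered:
  assumes f: "graph_iso_map n f E H" and H: "H \<subseteq> vpairs n"
    and ab: "a < n" "b < n" "a \<noteq> b" "a \<notin> \<Union>E" "b \<notin> \<Union>E"
    and cd: "c < n" "d < n" "c \<noteq> d" "c \<notin> \<Union>H" "d \<notin> \<Union>H"
  obtains g where "graph_iso_map n g E H" "g a = c" "g b = d"
proof -
  have bij: "bij_betw f {..<n} {..<n}" using f unfolding graph_iso_map_def by blast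
  have fa: "f a < n" "f a \<notin> \<Union>H" and fb: "f b < n" "f b \<notin> \<Union>H"
    using ab graph_iso_map_uncovered[OF f H] bij_betwE[OF bij] by auto
  have "f a \<noteq> f b" using ab bij unfolding bij_betw_def inj_on_def by blast
  define g1 where "g1 = transpose (f a) c \<circ> f"
  have g1: "graph_iso_map n g1 E H"
    unfolding g1_def using graph_iso_map_transpose_uncovered[OF f fa(1) cd(1) fa(2) cd(4)] .
  have g1b: "g1 b < n" "g1 b \<notin> \<Union>H" "g1 b \<noteq> c"
    using fa fb cd \<open>f a \<noteq> f b\<close> unfolding g1_def by (auto simp: transpose_def)
  define g where "g = transpose (g1 b) d \<circ> g1"
  show ?thesis
  proof
    show "graph_iso_map n g E H"
      unfolding g_def using graph_iso_map_transpose_uncovered[OF g1 g1b(1) cd(2) g1b(2) cd(5)] .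
    show "g a = c" using g1b(3) cd(3) unfolding g_def g1_def by simp
    show "g b = d" unfolding g_def by simp
  qed
qed

lemma graph_iso_insert_uncovered_edges:
  assumes "graph_iso n E H" "H \<subseteq> vpairs n"
    and "a < n" "b < n" "a \<noteq> b" "a \<notin> \<Union>E" "b \<notin> \<Union>E"
    and "c < n" "d < n" "c \<noteq> d" "c \<notin> \<Union>H" "d \<notin> \<Union>H"
  shows "graph_iso n (insert {a, b} E) (insert {c, d} H)"
proof -
  obtain f where "graph_iso_map n f E H" using assms(1) graph_iso_iff_map by blast
  then obtain g where "graph_iso_map n g E H" "g a = c" "g b = d"
    using graph_iso_map_prescribe_uncovered assms(2-) by metis
  then show ?thesis using graph_iso_map_insert_edge graph_iso_iff_map assms(3,4) by metis
qed

lemma matching_remove_edge: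
  assumes "matching E" "e \<in> E"
  shows "matching (E - {e})" and "\<And>v. v \<in> e \<Longrightarrow> v \<notin> \<Union>(E - {e})"
proof -
  show "matching (E - {e})" using assms(1) unfolding matching_def by (rule pairwise_subset) blast
  fix v assume "v \<in> e"
  show "v \<notin> \<Union>(E - {e})"
  proof
    assume "v \<in> \<Union>(E - {e})"
    then obtain e' where "e' \<in> E" "e' \<noteq> e" "v \<in> e'" by blast
    then have "disjnt e e'" using assms unfolding matching_def by (metis pairwiseD)
    then show False using \<open>v \<in> e\<close> \<open>v \<in> e'\<close> by (simp add: disjnt_iff)
  qed
qed

lemma graph_iso_matchings:
  assumes "E \<subseteq> vpairs n" "H \<subseteq> vpairs n" "matching E" "matching H" "card E = card H"
  shows "graph_iso n E H"
  using assms
proof (induction "card E" arbitrary: E H)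
  case 0
  then have "E = {}" "H = {}" using finite_vpairs finite_subset by (metis card_0_eq)+
  then show ?case unfolding graph_iso_def by (intro exI[of _ id]) auto
next
  case (Suc k)
  obtain e where "e \<in> E" using Suc.hyps(2) by fastforce
  then obtain a b where e: "e = {a, b}" "a < n" "b < n" "a \<noteq> b"
    using Suc.prems(1) unfolding vpairs_def by blast
  obtain h where "h \<in> H" using Suc.hyps(2) Suc.prems(5) by fastforce
  then obtain c d where h: "h = {c, d}" "c < n" "d < n" "c \<noteq> d"
    using Suc.prems(2) unfolding vpairs_def by blast
  have fin: "finite E" "finite H" using Suc.prems(1,2) finite_vpairs finite_subset by blast+
  have "graph_iso n (E - {e}) (H - {h})"
  proof (rule Suc.hyps(1))
    show "k = card (E - {e})" using Suc.hyps(2) fin \<open>e \<in> E\<close> by simp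
    show "card (E - {e}) = card (H - {h})" using Suc.prems(5) fin \<open>e \<in> E\<close> \<open>h \<in> H\<close> by simp
  qed (use Suc.prems matching_remove_edge \<open>e \<in> E\<close> \<open>h \<in> H\<close> in auto)
  then have "graph_iso n (insert e (E - {e})) (insert h (H - {h}))"
    unfolding e h using Suc.prems(2) e h
      matching_remove_edge(2)[OF Suc.prems(3) \<open>e \<in> E\<close>] matching_remove_edge(2)[OF Suc.prems(4) \<open>h \<in> H\<close>]
    by (intro graph_iso_insert_uncovered_edges) auto
  then show ?case using \<open>e \<in> E\<close> \<open>h \<in> H\<close> by (simp add: insert_absorb)
qed

section \<open>Reconstruction of matchings\<close>

lemma same_1nbhds_degree:
  assumes E: "E \<subseteq> vpairs n" and H: "H \<subseteq> vpairs n" and "same_1nbhds n E H"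
  obtains \<phi> where "bij_betw \<phi> {..<n} {..<n}" "\<And>v. v < n \<Longrightarrow> degree H (\<phi> v) = degree E v"
proof -
  obtain \<phi> where \<phi>: "bij_betw \<phi> {..<n} {..<n}" and iso: "\<And>v. v < n \<Longrightarrow> nbhd1_iso E v H (\<phi> v)"
    using assms(3) unfolding same_1nbhds_def by blast
  have "card (closed_nbhd E v) = card (closed_nbhd H (\<phi> v))" if v: "v < n" for v
  proof -
    obtain f where "bij_betw f (closed_nbhd E v) (closed_nbhd H (\<phi> v))"
      using iso[OF v] unfolding nbhd1_iso_def rooted_induced_iso_def by blast
    then show ?thesis by (rule bij_betw_same_card)
  qed
  then show thesis using that[OF \<phi>] card_closed_nbhd[OF E] card_closed_nbhd[OF H] by simp
qed

lemma card_Union_same_1nbhds: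
  assumes E: "E \<subseteq> vpairs n" and H: "H \<subseteq> vpairs n" and "same_1nbhds n E H"
  shows "card (\<Union>H) = card (\<Union>E)"
proof -
  obtain \<phi> where \<phi>: "bij_betw \<phi> {..<n} {..<n}" and deg: "\<And>v. v < n \<Longrightarrow> degree H (\<phi> v) = degree E v"
    using same_1nbhds_degree[OF assms] by blast
  have image: "\<phi> ` {v \<in> {..<n}. degree E v \<noteq> 0} = {w \<in> {..<n}. degree H w \<noteq> 0}"
  proof
    show "\<phi> ` {v \<in> {..<n}. degree E v \<noteq> 0} \<subseteq> {w \<in> {..<n}. degree H w \<noteq> 0}"
      using deg bij_betwE[OF \<phi>] by auto
    show "{w \<in> {..<n}. degree H w \<noteq> 0} \<subseteq> \<phi> ` {v \<in> {..<n}. degree E v \<noteq> 0}"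
    proof
      fix w assume w: "w \<in> {w \<in> {..<n}. degree H w \<noteq> 0}"
      then have "w \<in> \<phi> ` {..<n}" using bij_betw_imp_surj_on[OF \<phi>] by simp
      then obtain v where "v < n" "w = \<phi> v" by blast
      then show "w \<in> \<phi> ` {v \<in> {..<n}. degree E v \<noteq> 0}" using w deg by auto
    qed
  qed
  have "inj_on \<phi> {v \<in> {..<n}. degree E v \<noteq> 0}"
    using bij_betw_imp_inj_on[OF \<phi>] by (rule inj_on_subset) blast
  from card_image[OF this] show ?thesis
    unfolding Union_eq_positive_degree[OF E] Union_eq_positive_degree[OF H] image .
qed

lemma reconstructible_1_matching:
  assumes E: "E \<subseteq> vpairs n" and "matching E"
  shows "reconstructible_1 n E"
  unfolding reconstructible_1_def
proof (intro allI impI)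
  fix H assume H: "H \<subseteq> vpairs n" and same: "same_1nbhds n E H"
  obtain \<phi> where \<phi>: "bij_betw \<phi> {..<n} {..<n}" and deg: "\<And>v. v < n \<Longrightarrow> degree H (\<phi> v) = degree E v"
    using same_1nbhds_degree[OF E H same] by blast
  have "matching H"
    unfolding matching_iff_degree_le_1[OF H]
  proof (intro allI impI)
    fix w assume "w < n"
    then obtain v where "v < n" "w = \<phi> v" using \<phi> unfolding bij_betw_def by (metis imageE lessThan_iff)
    then show "degree H w \<le> 1" using deg \<open>matching E\<close> matching_iff_degree_le_1[OF E] by simp
  qed
  moreover have "card E = card H"
    using card_Union_same_1nbhds[OF E H same] card_Union_matching[OF E \<open>matching E\<close>]
      card_Union_matching[OF H \<open>matching H\<close>] by simp
  ultimately show "graph_iso n E H" using graph_iso_matchings[OF E H \<open>matching E\<close>] by blast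
qed

section \<open>Sparse random graphs are matchings\<close>

lemma not_matching_path2:
  assumes E: "E \<subseteq> vpairs n" and "\<not> matching E"
  obtains x y z where "x < n" "y < n" "z < n" "y \<noteq> x" "z \<noteq> x" "y \<noteq> z" "{x, y} \<in> E" "{x, z} \<in> E"
proof -
  obtain x where "x < n" "\<not> degree E x \<le> 1" using assms matching_iff_degree_le_1 by blast
  moreover have fin: "finite {u. {u, x} \<in> E}" using neighbours_subset[OF E] finite_subset by blast
  ultimately obtain y z where yz: "y \<in> {u. {u, x} \<in> E}" "z \<in> {u. {u, x} \<in> E}" "y \<noteq> z"
    unfolding degree_def using card_le_Suc0_iff_eq[OF fin] by auto
  then have "y \<in> {..<n} - {x}" "z \<in> {..<n} - {x}" using neighbours_subset[OF E] by blast+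
  moreover have "{x, y} \<in> E" "{x, z} \<in> E" using yz by (simp_all add: insert_commute)
  ultimately show thesis using that[OF \<open>x < n\<close>] \<open>y \<noteq> z\<close> by blast
qed

lemma gnp_prob_not_matching_le:
  fixes q :: real
  assumes q: "0 \<le> q" "q \<le> 1"
  shows "gnp_prob n q (\<lambda>E. \<not> matching E) \<le> real n ^ 3 * q ^ 2"
proof -
  define T where "T = {(x, y, z). x < n \<and> y < n \<and> z < n \<and> y \<noteq> x \<and> z \<noteq> x \<and> y \<noteq> z}"
  define A where "A = (\<lambda>(x, y, z). {{x, y}, {x, z}} :: nat set set)"
  have T_sub: "T \<subseteq> {..<n} \<times> {..<n} \<times> {..<n}" unfolding T_def by auto
  then have "finite T" by (rule finite_subset) simp
  have A: "A t \<subseteq> vpairs n" "card (A t) = 2" if "t \<in> T" for t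
  proof -
    obtain x y z where t: "t = (x, y, z)" "x < n" "y < n" "z < n" "y \<noteq> x" "z \<noteq> x" "y \<noteq> z"
      using \<open>t \<in> T\<close> unfolding T_def by blast
    then have "{x, y} \<in> vpairs n" "{x, z} \<in> vpairs n" unfolding vpairs_def by blast+
    then show "A t \<subseteq> vpairs n" unfolding A_def t by simp
    have "{x, y} \<noteq> {x, z}" using t by (simp add: doubleton_eq_iff)
    then show "card (A t) = 2" unfolding A_def t by simp
  qed
  have "gnp_prob n q (\<lambda>E. \<not> matching E) \<le> (\<Sum>t\<in>T. q ^ card (A t))"
  proof (rule gnp_prob_union_bound[OF q \<open>finite T\<close> A(1)])
    fix E assume "E \<subseteq> vpairs n" "\<not> matching E"
    then obtain x y z where "(x, y, z) \<in> T" "A (x, y, z) \<subseteq> E"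
      unfolding T_def A_def by (rule not_matching_path2) auto
    then show "\<exists>t\<in>T. A t \<subseteq> E" by blast
  qed
  also have "\<dots> = real (card T) * q ^ 2" using A(2) by simp
  also have "\<dots> \<le> real n ^ 3 * q ^ 2"
  proof (rule mult_right_mono)
    have "card T \<le> n ^ 3"
      using card_mono[OF _ T_sub] by (simp add: card_cartesian_product power3_eq_cube)
    then show "real (card T) \<le> real n ^ 3" by (metis of_nat_le_iff of_nat_power)
  qed simp
  finally show ?thesis .
qed

lemma gnp_prob_reconstructible_1_ge:
  fixes q :: real
  assumes "0 \<le> q" "q \<le> 1"
  shows "1 - real n ^ 3 * q ^ 2 \<le> gnp_prob n q (reconstructible_1 n)"
proof -
  have "gnp_prob n q (\<lambda>E. \<not> reconstructible_1 n E) \<le> gnp_prob n q (\<lambda>E. \<not> matching E)"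
    using assms reconstructible_1_matching by (intro gnp_prob_mono) blast+
  then show ?thesis using gnp_prob_compl gnp_prob_not_matching_le[OF assms, of n] by simp
qed

lemma smallo_tendsto_cube_mult_square:
  fixes p :: "nat \<Rightarrow> real"
  assumes "p \<in> o(\<lambda>n. real n powr (-3/2))"
  shows "(\<lambda>n. real n ^ 3 * p n ^ 2) \<longlonglongrightarrow> 0"
proof -
  have "(\<lambda>n. (p n / real n powr (-3/2)) ^ 2) \<longlonglongrightarrow> 0"
    using tendsto_power[OF smalloD_tendsto[OF assms], of 2] by simp
  moreover have "\<forall>\<^sub>F n in sequentially. (p n / real n powr (-3/2)) ^ 2 = real n ^ 3 * p n ^ 2"
  proof (rule eventually_sequentiallyI[of 1])
    fix n :: nat assume "1 \<le> n"
    then have pos: "0 < real n" by simp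
    have "(real n powr (-3/2)) ^ 2 = real n powr (of_nat 2 * (-3/2))"
      using pos by (intro powr_power) simp
    also have "(of_nat 2 * (-3/2) :: real) = - 3" by simp
    also have "real n powr (- 3) = inverse (real n powr 3)" by (rule powr_minus)
    also have "real n powr 3 = real n ^ 3" using pos by simp
    finally have denominator: "(real n powr (-3/2)) ^ 2 = inverse (real n ^ 3)" .
    show "(p n / real n powr (-3/2)) ^ 2 = real n ^ 3 * p n ^ 2"
      unfolding power_divide denominator by (simp add: divide_inverse)
  qed
  ultimately show ?thesis by (rule Lim_transform_eventually)
qed

theorem theorem1p7:
  fixes p :: "nat \<Rightarrow> real"
  assumes "\<And>n. 0 \<le> p n" and "\<And>n. p n \<le> 1"
    and "p \<in> o(\<lambda>n. real n powr (-3/2))"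
  shows "(\<lambda>n. gnp_prob n (p n) (reconstructible_1 n)) \<longlonglongrightarrow> 1"
proof (rule tendsto_sandwich)
  show "\<forall>\<^sub>F n in sequentially. 1 - real n ^ 3 * p n ^ 2 \<le> gnp_prob n (p n) (reconstructible_1 n)"
    using gnp_prob_reconstructible_1_ge assms(1,2) by simp
  show "\<forall>\<^sub>F n in sequentially. gnp_prob n (p n) (reconstructible_1 n) \<le> 1"
    using gnp_prob_le_1 assms(1,2) by simp
  show "(\<lambda>n. 1 - real n ^ 3 * p n ^ 2) \<longlonglongrightarrow> 1"
    using tendsto_diff[OF tendsto_const smallo_tendsto_cube_mult_square[OF assms(3)], of 1] by simp
qed simp

end
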